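(* Let $T$ be a tournament of order $n\ge 3$. If $V(T)$ has a partition $X,Y$ with $\big||X|-|Y|\big|\le 1$ such that every arc of $T$ between $X$ and $Y$ goes from $X$ to $Y$ (i.e. $(x,y)\in A(T)$ for all $x\in X$, $y\in Y$), then $T$ has no $\overrightarrow{P_3}$-decomposition.
   Context: A tournament is an orientation of a complete graph. A $\overrightarrow{P_3}$-decomposition of a digraph is a partition of its arc set into directed paths of length $2$. *)

theory Defs
  imports Main
begin

definition tournament :: "'a set \<Rightarrow> ('a \<times> 'a) set \<Rightarrow> bool" where
  "tournament V A \<longleftrightarrow>
     A \<subseteq> V \<times> V \<and> (\<forall>v. (v, v) \<notin> A) \<and>
     (\<forall>u\<in>V. \<forall>v\<in>V. u \<noteq> v \<longrightarrow> ((u, v) \<in> A \<longleftrightarrow> (v, u) \<notin> A))"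

definition p3_arcs :: "'a \<times> 'a \<times> 'a \<Rightarrow> ('a \<times> 'a) set" where
  "p3_arcs p = (case p of (u, v, w) \<Rightarrow> {(u, v), (v, w)})"

definition is_p3 :: "('a \<times> 'a) set \<Rightarrow> 'a \<times> 'a \<times> 'a \<Rightarrow> bool" where
  "is_p3 A p \<longleftrightarrow> (case p of (u, v, w) \<Rightarrow>
      u \<noteq> v \<and> v \<noteq> w \<and> u \<noteq> w \<and> (u, v) \<in> A \<and> (v, w) \<in> A)"

definition P3_decomposition :: "('a \<times> 'a) set \<Rightarrow> ('a \<times> 'a \<times> 'a) set \<Rightarrow> bool" where
  "P3_decomposition A P \<longleftrightarrow>
     (\<forall>p\<in>P. is_p3 A p) \<and>
     (\<forall>p\<in>P. \<forall>q\<in>P. p \<noteq> q \<longrightarrow> p3_arcs p \<inter> p3_arcs q = {}) \<and>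
     (\<Union>p\<in>P. p3_arcs p) = A"

definition has_P3_decomposition :: "('a \<times> 'a) set \<Rightarrow> bool" where
  "has_P3_decomposition A \<longleftrightarrow> (\<exists>P. P3_decomposition A P)"

end

theory Submission
  imports Defs
begin

text \<open>A tournament on \<open>n\<close> vertices has \<open>n(n-1)/2\<close> arcs, so a \<open>P\<^sub>3\<close>-decomposition of it
  consists of \<open>n(n-1)/4\<close> paths. No path uses two arcs from \<open>X\<close> to \<open>Y\<close>, since its middle
  vertex would have to lie in both \<open>Y\<close> and \<open>X\<close>; hence every one of the \<open>|X||Y|\<close> arcs
  from \<open>X\<close> to \<open>Y\<close> needs its own path. But for a balanced partition
  \<open>4|X||Y| \<ge> n\<^sup>2 - 1 > n(n-1)\<close> as soon as \<open>n \<ge> 3\<close>.\<close>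

lemma card_tournament_arcs:
  assumes "finite V" "tournament V A"
  shows "2 * card A = card V * (card V - 1)"
proof -
  have A_sub: "A \<subseteq> V \<times> V" and loopless: "\<forall>v. (v, v) \<notin> A"
    and total: "\<forall>u\<in>V. \<forall>v\<in>V. u \<noteq> v \<longrightarrow> ((u, v) \<in> A \<longleftrightarrow> (v, u) \<notin> A)"
    using assms(2) unfolding tournament_def by blast+
  have finite_A: "finite A"
    using A_sub assms(1) finite_subset by blast
  have disjoint: "A \<inter> A\<inverse> = {}"
  proof (safe, simp)
    fix u v assume "(u, v) \<in> A" "(v, u) \<in> A"
    then show False
      using A_sub loopless total by (metis mem_Sigma_iff subsetD)
  qed
  have union: "A \<union> A\<inverse> = V \<times> V - Id_on V"
    using A_sub loopless total by (auto simp: Id_on_def)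
  have "Id_on V = (\<lambda>v. (v, v)) ` V"
    by (auto simp: Id_on_def)
  then have card_Id_on: "card (Id_on V) = card V"
    by (simp add: card_image inj_on_def)
  have "2 * card A = card (A \<union> A\<inverse>)"
    using card_Un_disjoint[OF finite_A _ disjoint] finite_A by simp
  also have "\<dots> = card V * card V - card V"
  proof -
    have "Id_on V \<subseteq> V \<times> V"
      by auto
    then show ?thesis
      unfolding union using assms(1) card_Id_on
      by (simp add: card_Diff_subset card_cartesian_product finite_subset)
  qed
  finally show ?thesis
    by (simp add: diff_mult_distrib2)
qed

lemma P3_decomposition_subset_Field:
  assumes "P3_decomposition A P"
  shows "P \<subseteq> Field A \<times> Field A \<times> Field A"
proof
  fix p assume "p \<in> P"
  with assms have "is_p3 A p"
    unfolding P3_decomposition_def by blast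
  then show "p \<in> Field A \<times> Field A \<times> Field A"
    by (cases p) (auto simp: is_p3_def intro: FieldI1 FieldI2)
qed

lemma finite_P3_decomposition:
  assumes "finite A" "P3_decomposition A P"
  shows "finite P"
  using P3_decomposition_subset_Field[OF assms(2)] finite_Field[OF assms(1)]
  by (meson finite_SigmaI finite_subset)

lemma card_p3_arcs:
  assumes "is_p3 A p"
  shows "card (p3_arcs p) = 2"
  using assms by (cases p) (auto simp: is_p3_def p3_arcs_def)

lemma card_P3_decomposition:
  assumes "finite A" "P3_decomposition A P"
  shows "card A = 2 * card P"
proof -
  have finite_P: "finite P"
    using finite_P3_decomposition[OF assms] .
  have paths: "\<forall>p\<in>P. is_p3 A p"
    and disjoint: "\<forall>p\<in>P. \<forall>q\<in>P. p \<noteq> q \<longrightarrow> p3_arcs p \<inter> p3_arcs q = {}"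
    and cover: "(\<Union>p\<in>P. p3_arcs p) = A"
    using assms(2) unfolding P3_decomposition_def by blast+
  have "card A = (\<Sum>p\<in>P. card (p3_arcs p))"
    unfolding cover[symmetric]
    by (rule card_UN_disjoint[OF finite_P _ disjoint]) (auto simp: p3_arcs_def split: prod.splits)
  also have "\<dots> = (\<Sum>p\<in>P. 2)"
    using paths card_p3_arcs by (metis sum.cong)
  finally show ?thesis
    by simp
qed

lemma card_p3_arcs_between_le_1:
  assumes "X \<inter> Y = {}"
  shows "card (p3_arcs p \<inter> X \<times> Y) \<le> 1"
proof -
  obtain u v w where p: "p = (u, v, w)"
    by (cases p) blast
  have "\<not> ((u, v) \<in> X \<times> Y \<and> (v, w) \<in> X \<times> Y)"
    using assms by auto
  then have "p3_arcs p \<inter> X \<times> Y \<subseteq> {(u, v)} \<or> p3_arcs p \<inter> X \<times> Y \<subseteq> {(v, w)}"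
    by (auto simp: p p3_arcs_def)
  then obtain e where "p3_arcs p \<inter> X \<times> Y \<subseteq> {e}"
    by blast
  then show ?thesis
    using card_mono[of "{e}"] by simp
qed

lemma card_between_le_card_P3_decomposition:
  assumes "finite A" "P3_decomposition A P"
    and "X \<inter> Y = {}" "X \<times> Y \<subseteq> A"
  shows "card X * card Y \<le> card P"
proof -
  have finite_P: "finite P"
    using finite_P3_decomposition[OF assms(1,2)] .
  have "(\<Union>p\<in>P. p3_arcs p) = A"
    using assms(2) unfolding P3_decomposition_def by blast
  then have cover: "X \<times> Y = (\<Union>p\<in>P. p3_arcs p \<inter> X \<times> Y)"
    using assms(4) by blast
  have disjoint: "\<forall>p\<in>P. \<forall>q\<in>P. p \<noteq> q \<longrightarrow> (p3_arcs p \<inter> X \<times> Y) \<inter> (p3_arcs q \<inter> X \<times> Y) = {}"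
    using assms(2) unfolding P3_decomposition_def by blast
  have "card X * card Y = card (X \<times> Y)"
    by (simp add: card_cartesian_product)
  also have "\<dots> = card (\<Union>p\<in>P. p3_arcs p \<inter> X \<times> Y)"
    by (rule arg_cong[OF cover])
  also have "\<dots> = (\<Sum>p\<in>P. card (p3_arcs p \<inter> X \<times> Y))"
    by (rule card_UN_disjoint[OF finite_P _ disjoint]) (auto simp: p3_arcs_def split: prod.splits)
  also have "\<dots> \<le> (\<Sum>p\<in>P. 1)"
    by (rule sum_mono) (rule card_p3_arcs_between_le_1[OF assms(3)])
  finally show ?thesis
    by simp
qed

lemma balanced_product_gt:
  fixes a b :: nat
  assumes "a + b \<ge> 3" "\<bar>int a - int b\<bar> \<le> 1"
  shows "(a + b) * (a + b - 1) < 4 * (a * b)"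
proof -
  have "(int a - int b)\<^sup>2 \<le> 1"
    using assms(2) by (metis abs_le_square_iff abs_one one_power2)
  then have square: "(int a + int b)\<^sup>2 \<le> 4 * (int a * int b) + 1"
    by (simp add: power2_eq_square algebra_simps)
  have "int ((a + b) * (a + b - 1)) = (int a + int b) * (int a + int b - 1)"
    using assms(1) by (simp add: of_nat_diff)
  also have "\<dots> = (int a + int b)\<^sup>2 - (int a + int b)"
    by (simp add: power2_eq_square algebra_simps)
  also have "\<dots> < int (4 * (a * b))"
    using square assms(1) by simp
  finally show ?thesis
    by linarith
qed

theorem corollary3p4:
  fixes V :: "'a set" and A :: "('a \<times> 'a) set" and X Y :: "'a set"
  assumes "finite V" and "card V \<ge> 3"
    and "tournament V A"
    and "X \<union> Y = V" and "X \<inter> Y = {}"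
    and "\<bar>int (card X) - int (card Y)\<bar> \<le> 1"
    and "\<forall>x\<in>X. \<forall>y\<in>Y. (x, y) \<in> A"
  shows "\<not> has_P3_decomposition A"
proof
  assume "has_P3_decomposition A"
  then obtain P where P: "P3_decomposition A P"
    unfolding has_P3_decomposition_def by blast
  have finite_A: "finite A"
    using assms(1,3) unfolding tournament_def by (meson finite_SigmaI finite_subset)
  have card_V: "card V = card X + card Y"
    using assms(1,4,5) by (metis card_Un_disjoint finite_Un)
  have "card V * (card V - 1) = 4 * card P"
    using card_tournament_arcs[OF assms(1,3)] card_P3_decomposition[OF finite_A P] by simp
  moreover have "card X * card Y \<le> card P"
    using card_between_le_card_P3_decomposition[OF finite_A P assms(5)] assms(7) by blast
  moreover have "card V * (card V - 1) < 4 * (card X * card Y)"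
    using balanced_product_gt[OF _ assms(6)] assms(2) card_V by simp
  ultimately show False
    by linarith
qed

end
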